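(* Let $P(x)=a_nx^n+\cdots+a_1x$ be a nonconstant polynomial with nonnegative integer coefficients, $a_n\ne0$, and content $\gcd(a_n,\dots,a_1)=1$. Let $(a,b)\in\mathbb{N}^2$, and for $1\le t<a$ set $d_t=\dfrac{P(a)}{\gcd(P(a),P(t))}$ and $\mathscr{L}_P(a)=\operatorname{lcm}\{d_t:1\le t<a\}$. If $\gcd(b,\mathscr{L}_P(a))=1$, then \[ \frac{b\,P(t)}{P(a)}\notin\mathbb{Z}\quad\text{for all integers } 1\le t<a, \] and hence $(a,b)$ is $\mathcal{F}(a_n,\dots,a_1)$-visible.
   Context: $\mathbb{N}$ denotes the positive integers; $\operatorname{lcm}$ of the empty set is $1$. The family $\mathcal{F}(a_n,\dots,a_1)=\{y=q(a_nx^n+\cdots+a_1x): q\in\mathbb{Q}^+\}$. A point $(r,s)\in\mathbb{N}^2$ is $\mathcal{F}(a_n,\dots,a_1)$-visible if there is $q\in\mathbb{Q}^+$ with $s=q(a_nr^n+\cdots+a_1r)$ and no other point of $\mathbb{N}^2$ lies on the curve $y=q(a_nx^n+\cdots+a_1x)$ between the origin and $(r,s)$. *)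

theory Defs
  imports "HOL-Computational_Algebra.Polynomial_Factorial"
begin

definition on_curve :: "int poly \<Rightarrow> rat \<Rightarrow> nat \<Rightarrow> nat \<Rightarrow> bool" where
  "on_curve P q r s \<longleftrightarrow> of_nat s = q * of_int (poly P (int r))"

text \<open>(r,s) in N^2 (positive integers) is F-visible: some positive rational q puts
  (r,s) on the curve y = q P(x), and no other point of N^2 lies on that curve
  strictly between the origin and (r,s), i.e. with abscissa in (0,r).\<close>

definition F_visible :: "int poly \<Rightarrow> nat \<Rightarrow> nat \<Rightarrow> bool" where
  "F_visible P r s \<longleftrightarrow> 0 < r \<and> 0 < s \<and>
     (\<exists>q::rat. 0 < q \<and> on_curve P q r s \<and>
        (\<forall>r' s'. 0 < r' \<and> 0 < s' \<and> r' < r \<longrightarrow> \<not> on_curve P q r' s'))"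

text \<open>d_t = P(a) / gcd(P(a), P(t)) and L_P(a) = lcm { d_t : 1 <= t < a } (lcm of empty set = 1).\<close>

definition d_val :: "int poly \<Rightarrow> nat \<Rightarrow> nat \<Rightarrow> int" where
  "d_val P a t = poly P (int a) div gcd (poly P (int a)) (poly P (int t))"

definition L_P :: "int poly \<Rightarrow> nat \<Rightarrow> int" where
  "L_P P a = Lcm (d_val P a ` {1..<a})"

end

theory Submission
  imports Defs
begin

text \<open>Since \<open>P\<close> has nonnegative coefficients it is strictly increasing on \<open>[0,\<infinity>)\<close>, so
  \<open>0 < P(t) < P(a)\<close> for \<open>1 \<le> t < a\<close>. If \<open>P(a)\<close> divided \<open>b P(t)\<close>, then \<open>d\<^sub>t = P(a) / gcd(P(a), P(t))\<close>
  would divide \<open>b P(t) / gcd(P(a), P(t))\<close>, hence \<open>b\<close>; as \<open>d\<^sub>t\<close> also divides \<open>\<L>\<^sub>P(a)\<close>, which is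
  coprime to \<open>b\<close>, we get \<open>d\<^sub>t = 1\<close>, i.e. \<open>P(a)\<close> divides \<open>P(t)\<close>, which is impossible.
  Visibility is then witnessed by the curve through \<open>(a,b)\<close>, i.e. \<open>q = b / P(a)\<close>.\<close>

lemma poly_strict_mono_nonneg_coeffs:
  fixes P :: "'a::linordered_idom poly"
  assumes nonneg: "\<forall>i. coeff P i \<ge> 0" and "degree P \<ge> 1" and "0 \<le> x" "x < y"
  shows "poly P x < poly P y"
proof -
  have lead_pos: "lead_coeff P > 0"
    using nonneg \<open>degree P \<ge> 1\<close> by (metis order_le_less leading_coeff_0_iff not_one_le_zero degree_0)
  have "(\<Sum>i\<le>degree P. coeff P i * x ^ i) < (\<Sum>i\<le>degree P. coeff P i * y ^ i)"
  proof (rule sum_strict_mono_ex1)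
    show "\<forall>i\<in>{..degree P}. coeff P i * x ^ i \<le> coeff P i * y ^ i"
      using assms by (intro ballI mult_left_mono power_mono) auto
    have "lead_coeff P * x ^ degree P < lead_coeff P * y ^ degree P"
      using assms lead_pos by (intro mult_strict_left_mono power_strict_mono) auto
    then show "\<exists>i\<in>{..degree P}. coeff P i * x ^ i < coeff P i * y ^ i" by blast
  qed simp
  then show ?thesis by (simp add: poly_altdef)
qed

lemma poly_pos_nonneg_coeffs:
  fixes P :: "'a::linordered_idom poly"
  assumes "\<forall>i. coeff P i \<ge> 0" and "degree P \<ge> 1" and "0 < x"
  shows "0 < poly P x"
proof -
  have "poly P 0 < poly P x"
    using poly_strict_mono_nonneg_coeffs[OF assms(1,2) order_refl \<open>0 < x\<close>] .
  moreover have "0 \<le> poly P 0"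
    using assms(1) by (simp add: poly_0_coeff_0)
  ultimately show ?thesis by simp
qed

lemma dvd_of_dvd_mult_coprime_div_gcd:
  fixes a b t :: int
  assumes "a dvd b * t" and "coprime b (a div gcd a t)"
  shows "a dvd t"
proof (cases "a = 0")
  case True
  with assms show ?thesis by auto
next
  case False
  define g where "g = gcd a t"
  have "g \<noteq> 0" and a_eq: "a = g * (a div g)" and t_eq: "t = g * (t div g)"
    using False by (simp_all add: g_def)
  have "coprime (a div g) (t div g)"
    using False by (simp add: g_def div_gcd_coprime)
  moreover have "a div g dvd b * (t div g)"
    using assms(1) \<open>g \<noteq> 0\<close> a_eq t_eq
    by (metis dvd_mult_cancel_left mult.left_commute)
  ultimately have "a div g dvd b"
    by (simp add: coprime_dvd_mult_left_iff coprime_commute)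
  with assms(2) have "is_unit (a div g)"
    unfolding g_def by (meson coprime_common_divisor dvd_refl)
  then have "a dvd g"
    by (subst a_eq) simp
  then show ?thesis
    by (simp add: g_def dvd_trans)
qed

lemma d_val_dvd_L_P:
  assumes "1 \<le> t" "t < a"
  shows "d_val P a t dvd L_P P a"
  unfolding L_P_def using assms by (intro dvd_Lcm) auto

lemma ratio_not_Ints:
  fixes P :: "int poly" and a b t :: nat
  assumes "\<forall>i. coeff P i \<ge> 0" and "degree P \<ge> 1"
    and "1 \<le> t" "t < a" and "gcd (int b) (L_P P a) = 1"
  shows "(of_int (int b * poly P (int t)) / of_int (poly P (int a)) :: rat) \<notin> \<int>"
proof
  let ?A = "poly P (int a)" and ?T = "poly P (int t)"
  assume ratio_Ints: "(of_int (int b * ?T) / of_int ?A :: rat) \<in> \<int>"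
  have "0 < ?T" and "?T < ?A"
    using assms by (auto intro: poly_pos_nonneg_coeffs poly_strict_mono_nonneg_coeffs)
  then have "?A dvd int b * ?T"
    using ratio_Ints by (simp only: of_int_div_of_int_in_Ints_iff) simp
  moreover have "coprime (int b) (?A div gcd ?A ?T)"
    using d_val_dvd_L_P[OF assms(3,4), of P] assms(5)
    by (metis d_val_def coprime_divisors dvd_refl gcd_eq_1_imp_coprime)
  ultimately have "?A dvd ?T"
    by (rule dvd_of_dvd_mult_coprime_div_gcd)
  with \<open>0 < ?T\<close> \<open>?T < ?A\<close> show False
    by (simp add: zdvd_imp_le leD)
qed

lemma F_visible_if_ratios_not_Ints:
  fixes P :: "int poly" and a b :: nat
  assumes "0 < a" "0 < b" "0 < poly P (int a)"
    and "\<And>t. 1 \<le> t \<Longrightarrow> t < a \<Longrightarrow>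
      (of_int (int b * poly P (int t)) / of_int (poly P (int a)) :: rat) \<notin> \<int>"
  shows "F_visible P a b"
  unfolding F_visible_def
proof (intro conjI exI[of _ "of_int (int b) / of_int (poly P (int a))"] allI impI notI)
  show "0 < a" "0 < b" by (fact assms)+
  show "0 < (of_int (int b) / of_int (poly P (int a)) :: rat)"
    using assms by simp
  show "on_curve P (of_int (int b) / of_int (poly P (int a))) a b"
    unfolding on_curve_def using assms by simp
  fix r s assume "0 < r \<and> 0 < s \<and> r < a"
    and "on_curve P (of_int (int b) / of_int (poly P (int a))) r s"
  then have "(of_int (int b * poly P (int r)) / of_int (poly P (int a)) :: rat) \<in> \<int>"
    unfolding on_curve_def by (metis Ints_of_nat of_int_mult times_divide_eq_left)
  with assms(4) \<open>0 < r \<and> 0 < s \<and> r < a\<close> show False by simp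
qed

theorem theorem3p6:
  fixes P :: "int poly" and a b :: nat
  assumes nonneg: "\<forall>i. coeff P i \<ge> 0"
    and no_const: "coeff P 0 = 0"
    and nonconst: "degree P \<ge> 1"
    and content1: "content P = 1"
    and apos: "0 < a" and bpos: "0 < b"
    and cop: "gcd (int b) (L_P P a) = 1"
  shows "(\<forall>t::nat. 1 \<le> t \<and> t < a \<longrightarrow>
            (of_int (int b * poly P (int t)) / of_int (poly P (int a)) :: rat) \<notin> \<int>)
         \<and> F_visible P a b"
proof -
  have "(of_int (int b * poly P (int t)) / of_int (poly P (int a)) :: rat) \<notin> \<int>"
    if "1 \<le> t" "t < a" for t
    using ratio_not_Ints[OF nonneg nonconst that cop] .
  moreover have "0 < poly P (int a)"
    using poly_pos_nonneg_coeffs[OF nonneg nonconst] apos by simp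
  ultimately show ?thesis
    using F_visible_if_ratios_not_Ints[OF apos bpos] by blast
qed

end
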